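(* Let $I,J$ be finite sets and $E\subseteq I\times J$, with $J_i=\{j:(i,j)\in E\}$ and $I_j=\{i:(i,j)\in E\}$, and let $\lambda_i>0$ for $i\in I$. Let $p(\rho)=\min\{2\rho,1\}$. Suppose that nonnegative numbers $(x_{ij})_{(i,j)\in E}$, $(y_{ij})_{(i,j)\in E}$ and $(\Delta_j)_{j\in J}$ satisfy the following conditions: (i) $x_i:=\sum_{j\in J_i}x_{ij}\le\lambda_i$ for every $i$; (ii) $\sum_{j\in J_i}y_{ij}=\lambda_i\,p(x_i/\lambda_i)$ for every $i$; (iii) $\lambda_i p(x_i/\lambda_i)-\lambda_i p\big((x_i-x_{ij})/\lambda_i\big)\le y_{ij}\le\min\{2x_{ij},\lambda_i\}$ for every $(i,j)\in E$; (iv) $\Delta_j\le 1-\ln 2$ for every $j$. Let $y_j=\sum_{i\in I_j}y_{ij}$ and $\Delta_{ij}=(2x_{ij}-\lambda_i)^+$; no relation between $\Delta_j$ and $\sum_i\Delta_{ij}$ is assumed. Then \[ \sum_{j\in J}(2-\Delta_j)\sum_{i\in I_j}\Big(\lambda_i p\Big(\tfrac{x_i}{\lambda_i}\Big)-\lambda_i p\Big(\tfrac{x_i-x_{ij}}{\lambda_i}\Big)-\Delta_{ij}\Big)+\sum_{j\in J}y_j(\Delta_j-1+\ln 2)\ \le\ (2+2\ln 2)\sum_{(i,j)\in E}(y_{ij}-x_{ij}). \]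
   Context: $z^+=\max\{z,0\}$. *)

theory Defs
  imports Complex_Main
begin

definition p :: "real \<Rightarrow> real" where
  "p \<rho> = min (2 * \<rho>) 1"

definition pos_part :: "real \<Rightarrow> real" where
  "pos_part z = max z 0"

end

theory Submission
  imports Defs
begin

text \<open>Writing \<open>g\<^sub>i\<^sub>j\<close> for the summand of the first sum, condition (iii) gives
  \<open>g\<^sub>i\<^sub>j \<le> y\<^sub>i\<^sub>j\<close>, so since \<open>\<Delta>\<^sub>j \<le> 1 - ln 2\<close> every edge contributes at most \<open>(1 + ln 2) g\<^sub>i\<^sub>j\<close>.
  It remains to show \<open>\<Sum>\<^sub>j g\<^sub>i\<^sub>j \<le> 2 (y\<^sub>i - x\<^sub>i)\<close> at every vertex \<open>i\<close>, where
  \<open>y\<^sub>i = min (2x\<^sub>i) \<lambda>\<^sub>i\<close>. If \<open>2x\<^sub>i \<le> \<lambda>\<^sub>i\<close> then \<open>g\<^sub>i\<^sub>j = 2x\<^sub>i\<^sub>j\<close>. Otherwise, with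
  \<open>c = 2x\<^sub>i - \<lambda>\<^sub>i\<close>, one has \<open>g\<^sub>i\<^sub>j = (2x\<^sub>i\<^sub>j - c)\<^sup>+ - (2x\<^sub>i\<^sub>j - \<lambda>\<^sub>i)\<^sup>+ \<le> \<lambda>\<^sub>i - c\<close>, and when two
  or more of these terms are positive their sum is at most \<open>2x\<^sub>i - 2c = \<lambda>\<^sub>i - c\<close> as well.\<close>

lemma scaled_p_eq_min: "l > 0 \<Longrightarrow> l * p (a / l) = min (2 * a) l"
  by (auto simp: p_def min_def field_simps)

lemma sum_pos_part_diff_le:
  fixes a :: "'b \<Rightarrow> real"
  assumes fin: "finite K" and a_nn: "\<And>j. j \<in> K \<Longrightarrow> a j \<ge> 0"
    and sum_le: "sum a K \<le> c + l" and c: "0 \<le> c" "c \<le> l"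
  shows "(\<Sum>j\<in>K. pos_part (a j - c) - pos_part (a j - l)) \<le> l - c"
proof -
  define g where "g j = pos_part (a j - c) - pos_part (a j - l)" for j
  define S where "S = {j\<in>K. a j > c}"
  have SK: "S \<subseteq> K" and finS: "finite S"
    using fin by (auto simp: S_def)
  have "sum g K = sum g (K - S) + sum g S"
    using sum.subset_diff[OF SK fin] .
  also have "sum g (K - S) = 0"
    using c by (intro sum.neutral) (auto simp: g_def S_def pos_part_def)
  finally have sum_g: "sum g K = sum g S" by simp
  have "sum g S \<le> l - c"
  proof (cases "card S \<ge> 2")
    case True
    have "sum g S \<le> (\<Sum>j\<in>S. a j - c)"
      by (intro sum_mono) (auto simp: g_def S_def pos_part_def)
    also have "\<dots> = sum a S - real (card S) * c"
      by (simp add: sum_subtractf)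
    finally have "sum g S \<le> sum a S - real (card S) * c" .
    moreover have "sum a S \<le> sum a K"
      using fin SK a_nn by (intro sum_mono2) auto
    moreover have "2 * c \<le> real (card S) * c"
      using True c by (intro mult_right_mono) auto
    ultimately show ?thesis using sum_le by linarith
  next
    case False
    then consider "S = {}" | j where "S = {j}"
      using finS by (metis One_nat_def card_1_singletonE card_0_eq less_2_cases not_le)
    then show ?thesis
      using c by cases (auto simp: g_def pos_part_def)
  qed
  with sum_g show ?thesis by (simp add: g_def)
qed

lemma sum_min_increment_le:
  fixes x :: "'b \<Rightarrow> real"
  assumes fin: "finite K" and x_nn: "\<And>j. j \<in> K \<Longrightarrow> x j \<ge> 0"
    and X: "X = sum x K" and X_le: "X \<le> l"
  shows "(\<Sum>j\<in>K. min (2 * X) l - min (2 * (X - x j)) l - pos_part (2 * x j - l))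
         \<le> 2 * min (2 * X) l - 2 * X"
proof -
  have x_le: "x j \<le> X" if "j \<in> K" for j
    unfolding X using fin that x_nn by (intro member_le_sum) auto
  show ?thesis
  proof (cases "2 * X \<le> l")
    case True
    have "(\<Sum>j\<in>K. min (2 * X) l - min (2 * (X - x j)) l - pos_part (2 * x j - l))
        = (\<Sum>j\<in>K. 2 * x j)"
    proof (rule sum.cong[OF refl])
      fix j assume "j \<in> K"
      with x_le x_nn True show "min (2 * X) l - min (2 * (X - x j)) l - pos_part (2 * x j - l) = 2 * x j"
        by (force simp: pos_part_def)
    qed
    with True show ?thesis by (simp add: X sum_distrib_left)
  next
    case False
    define c where "c = 2 * X - l"
    have "(\<Sum>j\<in>K. min (2 * X) l - min (2 * (X - x j)) l - pos_part (2 * x j - l))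
        = (\<Sum>j\<in>K. pos_part (2 * x j - c) - pos_part (2 * x j - l))"
      using False by (intro sum.cong) (auto simp: c_def pos_part_def min_def max_def)
    also have "\<dots> \<le> l - c"
      using fin x_nn False X_le
      by (intro sum_pos_part_diff_le) (auto simp: c_def X sum_distrib_left[symmetric])
    finally show ?thesis using False by (simp add: c_def)
  qed
qed

lemma sum_by_fst:
  assumes "finite I" "finite J" "E \<subseteq> I \<times> J"
  shows "(\<Sum>(i, j)\<in>E. f i j) = (\<Sum>i\<in>I. \<Sum>j\<in>{j. (i, j) \<in> E}. f i j)"
proof -
  have "E = (SIGMA i:I. {j. (i, j) \<in> E})" using assms(3) by force
  moreover have "finite {j. (i, j) \<in> E}" for i
    using assms(2,3) by (rule_tac finite_subset) auto
  ultimately show ?thesis using assms(1) by (simp add: sum.Sigma)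
qed

lemma sum_by_snd:
  assumes "finite I" "finite J" "E \<subseteq> I \<times> J"
  shows "(\<Sum>(i, j)\<in>E. f i j) = (\<Sum>j\<in>J. \<Sum>i\<in>{i. (i, j) \<in> E}. f i j)"
proof -
  have "prod.swap ` E \<subseteq> J \<times> I" using assms(3) by auto
  from sum_by_fst[OF assms(2,1) this, of "\<lambda>j i. f i j"] show ?thesis
    by (simp add: sum.reindex case_prod_beta)
qed

theorem mainTheorem5:
  fixes I :: "'a set" and J :: "'b set" and E :: "('a \<times> 'b) set"
    and lam :: "'a \<Rightarrow> real" and x y :: "'a \<Rightarrow> 'b \<Rightarrow> real"
    and D :: "'b \<Rightarrow> real"
  assumes finI: "finite I" and finJ: "finite J" and EIJ: "E \<subseteq> I \<times> J"
    and lam_pos: "\<And>i. i \<in> I \<Longrightarrow> lam i > 0"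
    and x_nn: "\<And>i j. (i, j) \<in> E \<Longrightarrow> x i j \<ge> 0"
    and y_nn: "\<And>i j. (i, j) \<in> E \<Longrightarrow> y i j \<ge> 0"
    and D_nn: "\<And>j. j \<in> J \<Longrightarrow> D j \<ge> 0"
    and c1: "\<And>i. i \<in> I \<Longrightarrow> (\<Sum>j\<in>{j. (i, j) \<in> E}. x i j) \<le> lam i"
    and c2: "\<And>i. i \<in> I \<Longrightarrow> (\<Sum>j\<in>{j. (i, j) \<in> E}. y i j)
               = lam i * p ((\<Sum>j\<in>{j. (i, j) \<in> E}. x i j) / lam i)"
    and c3lo: "\<And>i j. (i, j) \<in> E \<Longrightarrow>
               lam i * p ((\<Sum>j'\<in>{j'. (i, j') \<in> E}. x i j') / lam i)
               - lam i * p (((\<Sum>j'\<in>{j'. (i, j') \<in> E}. x i j') - x i j) / lam i) \<le> y i j"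
    and c3hi: "\<And>i j. (i, j) \<in> E \<Longrightarrow> y i j \<le> min (2 * x i j) (lam i)"
    and c4: "\<And>j. j \<in> J \<Longrightarrow> D j \<le> 1 - ln 2"
  shows "(\<Sum>j\<in>J. (2 - D j) * (\<Sum>i\<in>{i. (i, j) \<in> E}.
            lam i * p ((\<Sum>j'\<in>{j'. (i, j') \<in> E}. x i j') / lam i)
            - lam i * p (((\<Sum>j'\<in>{j'. (i, j') \<in> E}. x i j') - x i j) / lam i)
            - pos_part (2 * x i j - lam i)))
         + (\<Sum>j\<in>J. (\<Sum>i\<in>{i. (i, j) \<in> E}. y i j) * (D j - 1 + ln 2))
         \<le> (2 + 2 * ln 2) * (\<Sum>(i, j)\<in>E. y i j - x i j)"
proof -
  define X where "X i = (\<Sum>j\<in>{j. (i, j) \<in> E}. x i j)" for i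
  define g where "g i j = lam i * p (X i / lam i) - lam i * p ((X i - x i j) / lam i)
            - pos_part (2 * x i j - lam i)" for i j
  have edge: "(2 - D j) * g i j + y i j * (D j - 1 + ln 2) \<le> (1 + ln 2) * g i j"
    if ij: "(i, j) \<in> E" for i j
  proof -
    have "g i j \<le> y i j" using c3lo[OF ij] by (simp add: g_def X_def pos_part_def)
    moreover have "D j \<le> 1 - ln 2" using ij EIJ c4 by auto
    ultimately have "0 \<le> (1 - ln 2 - D j) * (y i j - g i j)" by simp
    then show ?thesis by (simp add: algebra_simps)
  qed
  have vertex: "(\<Sum>j\<in>{j. (i, j) \<in> E}. g i j) \<le> 2 * (\<Sum>j\<in>{j. (i, j) \<in> E}. y i j - x i j)"
    if i: "i \<in> I" for i
  proof -
    have "finite {j. (i, j) \<in> E}" using EIJ finJ by (rule_tac finite_subset) auto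
    from sum_min_increment_le[OF this _ X_def[of i] c1[OF i, folded X_def]] x_nn c2[OF i] lam_pos[OF i]
    show ?thesis by (simp add: g_def X_def scaled_p_eq_min sum_subtractf sum_distrib_left)
  qed
  have "(\<Sum>j\<in>J. (2 - D j) * (\<Sum>i\<in>{i. (i, j) \<in> E}. g i j))
         + (\<Sum>j\<in>J. (\<Sum>i\<in>{i. (i, j) \<in> E}. y i j) * (D j - 1 + ln 2))
       = (\<Sum>(i, j)\<in>E. (2 - D j) * g i j + y i j * (D j - 1 + ln 2))"
    by (simp add: sum_by_snd[OF finI finJ EIJ] sum.distrib sum_distrib_left sum_distrib_right)
  also have "\<dots> \<le> (\<Sum>(i, j)\<in>E. (1 + ln 2) * g i j)"
    using edge by (intro sum_mono) auto
  also have "\<dots> = (1 + ln 2) * (\<Sum>i\<in>I. \<Sum>j\<in>{j. (i, j) \<in> E}. g i j)"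
    by (simp add: sum_by_fst[OF finI finJ EIJ] sum_distrib_left)
  also have "\<dots> \<le> (1 + ln 2) * (\<Sum>i\<in>I. 2 * (\<Sum>j\<in>{j. (i, j) \<in> E}. y i j - x i j))"
    using vertex by (intro mult_left_mono sum_mono) auto
  also have "\<dots> = (2 + 2 * ln 2) * (\<Sum>(i, j)\<in>E. y i j - x i j)"
    by (simp add: sum_by_fst[OF finI finJ EIJ] sum_distrib_left[symmetric] algebra_simps)
  finally show ?thesis unfolding g_def X_def .
qed

end
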